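(* Let $m\ge 1$ and let $t_1,\dots,t_m$ be real numbers with $0<t_i\le 1$ for all $i\in\{1,\dots,m\}$. Then $$\sum_{i=1}^{m}\frac{1-t_i}{t_i}\;\ge\;\sum_{i=1}^{m}\frac{t_i(1-t_i)}{\left(\frac{1}{m}\sum_{j=1}^{m}t_j\right)^{2}}.$$ *)

theory Defs
  imports Complex_Main
begin

end

theory Submission
  imports Defs "HOL-Analysis.Convex"
begin

(* With n indices and S the sum of the x_i, the right-hand side equals (n/S)^2 (S - sum x_i^2)
   and the left-hand side equals sum 1/x_i - n. The harmonic-mean bound sum 1/x_i >= n^2/S and
   the quadratic-mean bound sum x_i^2 >= S^2/n separate the two sides by n^2/S - n. *)

lemma card_squared_le_sum_mult_sum_inverse:
  fixes x :: "'a \<Rightarrow> real"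
  assumes "\<And>i. i \<in> I \<Longrightarrow> 0 < x i"
  shows "(real (card I))\<^sup>2 \<le> (\<Sum>i\<in>I. x i) * (\<Sum>i\<in>I. 1 / x i)"
proof -
  have "(\<Sum>i\<in>I. sqrt (x i) * (1 / sqrt (x i)))\<^sup>2
        \<le> (\<Sum>i\<in>I. (sqrt (x i))\<^sup>2) * (\<Sum>i\<in>I. (1 / sqrt (x i))\<^sup>2)"
    by (rule Cauchy_Schwarz_ineq_sum)
  also have "\<dots> = (\<Sum>i\<in>I. x i) * (\<Sum>i\<in>I. 1 / x i)"
    using assms by (simp add: power_divide less_imp_le)
  moreover have "(\<Sum>i\<in>I. sqrt (x i) * (1 / sqrt (x i))) = (\<Sum>i\<in>I. 1)"
    by (intro sum.cong) (auto dest: assms)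
  ultimately show ?thesis
    by simp
qed

lemma sum_mult_compl_div_mean_squared_le_sum_compl_div:
  fixes x :: "'a \<Rightarrow> real"
  assumes "finite I" "I \<noteq> {}" "\<And>i. i \<in> I \<Longrightarrow> 0 < x i"
  shows "(\<Sum>i\<in>I. x i * (1 - x i) / ((\<Sum>j\<in>I. x j) / card I)\<^sup>2)
         \<le> (\<Sum>i\<in>I. (1 - x i) / x i)"
proof -
  define n where "n = real (card I)"
  define S where "S = (\<Sum>i\<in>I. x i)"
  define Q where "Q = (\<Sum>i\<in>I. (x i)\<^sup>2)"
  have "n > 0"
    using assms(1,2) by (simp add: n_def card_gt_0_iff)
  have "S > 0"
    unfolding S_def using assms by (intro sum_pos) auto
  have AM_HM: "n\<^sup>2 \<le> S * (\<Sum>i\<in>I. 1 / x i)"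
    unfolding n_def S_def using assms(3) by (rule card_squared_le_sum_mult_sum_inverse)
  have QM_AM: "S\<^sup>2 \<le> Q * n"
    unfolding n_def S_def Q_def by (rule sum_squared_le_sum_of_squares)
  have "(\<Sum>i\<in>I. x i * (1 - x i)) = S - Q"
    by (simp add: S_def Q_def right_diff_distrib power2_eq_square sum_subtractf)
  then have "(\<Sum>i\<in>I. x i * (1 - x i) / (S / n)\<^sup>2) = (S - Q) / (S / n)\<^sup>2"
    by (simp add: sum_divide_distrib [symmetric])
  also have "\<dots> = n\<^sup>2 / S - n\<^sup>2 * Q / S\<^sup>2"
    using \<open>S > 0\<close> \<open>n > 0\<close> by (simp add: field_simps power2_eq_square)
  also have "\<dots> \<le> n\<^sup>2 / S - n"
    using QM_AM \<open>n > 0\<close> \<open>S > 0\<close> by (simp add: field_simps power2_eq_square)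
  also have "\<dots> \<le> (\<Sum>i\<in>I. 1 / x i) - n"
    using AM_HM \<open>S > 0\<close> by (simp add: divide_le_eq mult.commute)
  also have "\<dots> = (\<Sum>i\<in>I. 1 / x i - 1)"
    by (simp add: n_def sum_subtractf)
  also have "\<dots> = (\<Sum>i\<in>I. (1 - x i) / x i)"
    by (intro sum.cong) (auto simp: diff_divide_distrib dest: assms(3))
  finally show ?thesis
    by (simp add: S_def n_def)
qed

theorem lemma3p2:
  fixes m :: nat and t :: "nat \<Rightarrow> real"
  assumes "m \<ge> 1"
    and "\<And>i. i \<in> {1..m} \<Longrightarrow> 0 < t i \<and> t i \<le> 1"
  shows "(\<Sum>i=1..m. (1 - t i) / t i)
         \<ge> (\<Sum>i=1..m. t i * (1 - t i) / ((1 / real m) * (\<Sum>j=1..m. t j))^2)"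
  using sum_mult_compl_div_mean_squared_le_sum_compl_div [of "{1..m}" t] assms
  by simp

end
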